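(* Let $(f,p)$ be a DSIC one-player mechanism with quasi-linear additive utilities on $m$ items, and let $G_f$ be its allocation network. Let $C=(a^{(1)},\dots,a^{(k)}=a^{(1)})$ be a cycle in $G_f$ such that $Q_{a^{(j)}}\cap Q_{a^{(j+1)}}\neq\emptyset$ for every $j\in[k-1]$. Then the length $\sum_{j=1}^{k-1}\ell(a^{(j)},a^{(j+1)})$ of $C$ equals $0$.
   Context: Types $\theta\in\Theta\subseteq\mathbb R^m$, allocations $a\in\{0,1\}^m$, allocation function $f:\Theta\to\{0,1\}^m$, payment $p:\Theta\to\mathbb R$; DSIC means $\theta\cdot f(\theta)-p(\theta)\ge\theta\cdot f(\theta')-p(\theta')$ for all $\theta,\theta'\in\Theta$. $R_a=\{\theta\in\Theta:f(\theta)=a\}$ and $Q_a=\mathrm{cl}(R_a)$. The allocation network $G_f$ is the complete directed graph on node set $\{0,1\}^m$ with arc lengths $\ell(a,a')=\inf_{\theta\in R_{a'}}\{\theta\cdot a'-\theta\cdot a\}$. *)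

theory Defs
  imports "HOL-Analysis.Analysis"
begin

text \<open>Types are vectors in real^'m (m = CARD('m) items). Allocations are 0/1 vectors in real^'m.\<close>

definition allocations :: "(real^'m) set" where
  "allocations = {a. \<forall>i. a $ i \<in> {0, 1}}"

definition DSIC :: "(real^'m) set \<Rightarrow> (real^'m \<Rightarrow> real^'m) \<Rightarrow> (real^'m \<Rightarrow> real) \<Rightarrow> bool" where
  "DSIC \<Theta> f p \<longleftrightarrow> (\<forall>\<theta>\<in>\<Theta>. \<forall>\<theta>'\<in>\<Theta>. \<theta> \<bullet> f \<theta> - p \<theta> \<ge> \<theta> \<bullet> f \<theta>' - p \<theta>')"

definition alloc_region :: "(real^'m) set \<Rightarrow> (real^'m \<Rightarrow> real^'m) \<Rightarrow> real^'m \<Rightarrow> (real^'m) set" where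
  "alloc_region \<Theta> f a = {\<theta>\<in>\<Theta>. f \<theta> = a}"

definition alloc_region_cl :: "(real^'m) set \<Rightarrow> (real^'m \<Rightarrow> real^'m) \<Rightarrow> real^'m \<Rightarrow> (real^'m) set" where
  "alloc_region_cl \<Theta> f a = closure (alloc_region \<Theta> f a)"

text \<open>Arc length of the allocation network; infimum in the extended reals (empty infimum = +infinity).\<close>
definition arc_length :: "(real^'m) set \<Rightarrow> (real^'m \<Rightarrow> real^'m) \<Rightarrow> real^'m \<Rightarrow> real^'m \<Rightarrow> ereal" where
  "arc_length \<Theta> f a a' = (INF \<theta>\<in>alloc_region \<Theta> f a'. ereal (\<theta> \<bullet> a' - \<theta> \<bullet> a))"

end

theory Submission
  imports Defs
begin

text \<open>Under DSIC the payment is constant on each allocation region, so it defines a price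
  \<open>P a\<close> for every allocation \<open>a\<close> that is actually allocated. Comparing a type in \<open>R\<^sub>b\<close> with one
  in \<open>R\<^sub>a\<close> shows that \<open>\<theta> \<bullet> (b - a) \<ge> P b - P a\<close> on \<open>R\<^sub>b\<close> and \<open>\<le>\<close> on \<open>R\<^sub>a\<close>; both half-spaces are
  closed, so a common point of \<open>Q\<^sub>a\<close> and \<open>Q\<^sub>b\<close> attains \<open>P b - P a\<close> and the infimum defining
  \<open>\<ell>(a, b)\<close> equals it. The length of the cycle therefore telescopes to \<open>0\<close>.\<close>

lemma DSIC_payment_eq_on_region:
  assumes "DSIC \<Theta> f p" "t \<in> alloc_region \<Theta> f a" "s \<in> alloc_region \<Theta> f a"
  shows "p t = p s"
proof -
  have t_s: "t \<in> \<Theta>" "s \<in> \<Theta>" "f t = f s" using assms(2,3) unfolding alloc_region_def by auto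
  then have "t \<bullet> f s - p s \<le> t \<bullet> f t - p t" "s \<bullet> f t - p t \<le> s \<bullet> f s - p s"
    using assms(1) unfolding DSIC_def by blast+
  with t_s(3) show ?thesis by simp
qed

definition region_price :: "(real^'m) set \<Rightarrow> (real^'m \<Rightarrow> real^'m) \<Rightarrow> (real^'m \<Rightarrow> real) \<Rightarrow> real^'m \<Rightarrow> real"
  where "region_price \<Theta> f p a = p (SOME t. t \<in> alloc_region \<Theta> f a)"

lemma DSIC_payment_eq_region_price:
  assumes "DSIC \<Theta> f p" "t \<in> alloc_region \<Theta> f a"
  shows "p t = region_price \<Theta> f p a"
  unfolding region_price_def
  using DSIC_payment_eq_on_region[OF assms someI[of "\<lambda>t. t \<in> alloc_region \<Theta> f a", OF assms(2)]] .

lemma DSIC_region_price_diff_le: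
  assumes dsic: "DSIC \<Theta> f p" and \<theta>: "\<theta> \<in> alloc_region \<Theta> f b" and "alloc_region \<Theta> f a \<noteq> {}"
  shows "region_price \<Theta> f p b - region_price \<Theta> f p a \<le> \<theta> \<bullet> (b - a)"
proof -
  obtain t where t: "t \<in> alloc_region \<Theta> f a" using assms(3) by auto
  have "\<theta> \<bullet> f t - p t \<le> \<theta> \<bullet> f \<theta> - p \<theta>"
    using dsic \<theta> t unfolding DSIC_def alloc_region_def by auto
  moreover have "f \<theta> = b" "f t = a" using \<theta> t unfolding alloc_region_def by auto
  ultimately show ?thesis
    using DSIC_payment_eq_region_price[OF dsic \<theta>] DSIC_payment_eq_region_price[OF dsic t]
    by (simp add: inner_diff_right)
qed

lemma closure_inner_lower_bound:
  fixes S :: "'a::euclidean_space set"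
  assumes "\<And>\<theta>. \<theta> \<in> S \<Longrightarrow> c \<le> \<theta> \<bullet> v" "x \<in> closure S"
  shows "c \<le> x \<bullet> v"
proof -
  have "closure S \<subseteq> {\<theta>. c \<le> v \<bullet> \<theta>}"
    using assms(1) by (intro closure_minimal closed_halfspace_ge) (auto simp: inner_commute)
  with assms(2) show ?thesis by (auto simp: inner_commute)
qed

lemma INF_inner_eq_if_attained_in_closure:
  fixes S :: "'a::euclidean_space set"
  assumes lower: "\<And>\<theta>. \<theta> \<in> S \<Longrightarrow> c \<le> \<theta> \<bullet> v" and x: "x \<in> closure S" "x \<bullet> v \<le> c"
  shows "(INF \<theta>\<in>S. ereal (\<theta> \<bullet> v)) = ereal c"
proof (rule antisym)
  show "ereal c \<le> (INF \<theta>\<in>S. ereal (\<theta> \<bullet> v))"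
    using lower by (auto intro: INF_greatest)
  show "(INF \<theta>\<in>S. ereal (\<theta> \<bullet> v)) \<le> ereal c"
  proof (rule ccontr)
    assume "\<not> ?thesis"
    then obtain r where r: "c < r" "ereal r < (INF \<theta>\<in>S. ereal (\<theta> \<bullet> v))"
      using ereal_dense2 by (metis less_ereal.simps(1) not_le)
    have "r \<le> \<theta> \<bullet> v" if "\<theta> \<in> S" for \<theta>
      using less_le_trans[OF r(2) INF_lower[OF that]] by simp
    then have "r \<le> x \<bullet> v" using closure_inner_lower_bound x(1) by blast
    with x(2) r(1) show False by simp
  qed
qed

lemma DSIC_arc_length_eq_price_diff:
  assumes dsic: "DSIC \<Theta> f p"
    and x: "x \<in> alloc_region_cl \<Theta> f a" "x \<in> alloc_region_cl \<Theta> f b"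
  shows "arc_length \<Theta> f a b = ereal (region_price \<Theta> f p b - region_price \<Theta> f p a)"
proof -
  let ?P = "region_price \<Theta> f p"
  have nonempty: "alloc_region \<Theta> f c \<noteq> {}" if "x \<in> alloc_region_cl \<Theta> f c" for c
    using that unfolding alloc_region_cl_def by auto
  have "?P b - ?P a \<le> \<theta> \<bullet> (b - a)" if "\<theta> \<in> alloc_region \<Theta> f b" for \<theta>
    using DSIC_region_price_diff_le[OF dsic that nonempty[OF x(1)]] .
  moreover have "?P a - ?P b \<le> x \<bullet> (a - b)"
    using closure_inner_lower_bound DSIC_region_price_diff_le[OF dsic _ nonempty[OF x(2)]] x(1)
    unfolding alloc_region_cl_def by blast
  then have "x \<bullet> (b - a) \<le> ?P b - ?P a" by (simp add: inner_diff_right)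
  ultimately show ?thesis
    using INF_inner_eq_if_attained_in_closure x(2)
    unfolding arc_length_def alloc_region_cl_def inner_diff_right[symmetric] by blast
qed

theorem proposition3p4:
  fixes \<Theta> :: "(real^'m) set" and f :: "real^'m \<Rightarrow> real^'m" and p :: "real^'m \<Rightarrow> real"
    and a :: "nat \<Rightarrow> real^'m" and k :: nat
  assumes alloc: "\<forall>\<theta>\<in>\<Theta>. f \<theta> \<in> allocations"
    and dsic: "DSIC \<Theta> f p"
    and nodes: "\<forall>j\<in>{1..k}. a j \<in> allocations"
    and cyc: "a k = a 1"
    and inter: "\<forall>j\<in>{1..k-1}. alloc_region_cl \<Theta> f (a j) \<inter> alloc_region_cl \<Theta> f (a (j+1)) \<noteq> {}"
  shows "(\<Sum>j\<in>{1..k-1}. arc_length \<Theta> f (a j) (a (j+1))) = 0"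
proof (cases "k = 0")
  \<comment> \<open>The argument never uses that types and nodes are 0/1 vectors.\<close>
  case False
  let ?P = "\<lambda>j. region_price \<Theta> f p (a j)"
  have "(\<Sum>j\<in>{1..k-1}. arc_length \<Theta> f (a j) (a (j+1))) = (\<Sum>j\<in>{1..k-1}. ereal (?P (Suc j) - ?P j))"
    using inter DSIC_arc_length_eq_price_diff[OF dsic] by (intro sum.cong refl) (metis Suc_eq_plus1 disjoint_iff)
  also have "\<dots> = ereal (\<Sum>j\<in>{1..k-1}. ?P (Suc j) - ?P j)" by (simp add: sum_ereal)
  also have "(\<Sum>j\<in>{1..k-1}. ?P (Suc j) - ?P j) = ?P (Suc (k-1)) - ?P 1"
    using False by (intro sum_Suc_diff) simp
  also have "\<dots> = 0" using False cyc by simp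
  finally show ?thesis by (simp add: zero_ereal_def)
qed simp

end
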